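(* Let $\lambda$ be a normalized additively alternating $n\times n$ complex matrix of rank $n-1$, and let $I\subseteq\{0,\dots,n-1\}$ be the vertex set of a cycle of smoothable edges in the smoothing diagram of $\lambda$. Then: (1) every smoothable edge with both endpoints in $I$ (resp. both outside $I$) has all its colored angles with vertex in $I$ (resp. outside $I$); (2) the submatrix $(\lambda_{ij})_{i,j\in I}$ is normalized of corank one, and its smoothing diagram consists of the given cycle on $I$, with the same colorings of edges and angles; (3) $\lambda_{i_1j}=\lambda_{i_2j}$ for all $i_1,i_2\in I$ and $j\notin I$.
   Context: Additively alternating: $\lambda_{ji}=-\lambda_{ij}$; normalized: rows sum to $0$. The biresidue matrix of a normalized $\lambda$ of rank $m-1$ (size $m$) is the unique normalized alternating $b$ with $b|_\Delta=(\lambda|_\Delta)^{-1}$, $\Delta=\{z\in\mathbb{C}^m:\sum z_i=0\}$. Smoothing diagram of $\lambda$: the complete graph on the index set, where an edge $\{i,j\}$ is colored (smoothable) if $b_{ij}\ne0$ and $\theta_k:=(b_{jk}+b_{ki})/b_{ij}\in\mathbb{Z}_{\ge0}$ for all $k\ne i,j$, and for such an edge the angle $i-k-j$ is colored (darkly if $\theta_k=2$, lightly if $\theta_k=1$) whenever $\theta_k\ne0$. A cycle of smoothable edges is a sequence of $m\ge3$ distinct vertices $i_1,\dots,i_m$ with $\{i_1,i_2\},\dots,\{i_{m-1},i_m\},\{i_m,i_1\}$ all smoothable. *)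

theory Defs
  imports Complex_Main "Jordan_Normal_Form.DL_Rank"
begin

text \<open>Matrices are functions nat => nat => complex, considered on a finite index set S
  (for the full matrix S = {..<n}; for a principal submatrix S = I, keeping original indices).\<close>

definition add_alternating :: "nat set \<Rightarrow> (nat \<Rightarrow> nat \<Rightarrow> complex) \<Rightarrow> bool" where
  "add_alternating S lam \<longleftrightarrow> (\<forall>i\<in>S. \<forall>j\<in>S. lam j i = - lam i j)"

definition normalized :: "nat set \<Rightarrow> (nat \<Rightarrow> nat \<Rightarrow> complex) \<Rightarrow> bool" where
  "normalized S lam \<longleftrightarrow> (\<forall>i\<in>S. (\<Sum>j\<in>S. lam i j) = 0)"

definition to_mat :: "nat set \<Rightarrow> (nat \<Rightarrow> nat \<Rightarrow> complex) \<Rightarrow> complex mat" where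
  "to_mat S lam = mat (card S) (card S)
     (\<lambda>(a, b). lam (sorted_list_of_set S ! a) (sorted_list_of_set S ! b))"

definition mrank :: "nat set \<Rightarrow> (nat \<Rightarrow> nat \<Rightarrow> complex) \<Rightarrow> nat" where
  "mrank S lam = vec_space.rank (card S) (to_mat S lam)"

text \<open>b is a biresidue matrix of lam on S: normalized, alternating, and b restricted to
  Delta = {z. sum z = 0} inverts lam restricted to Delta (b maps Delta into Delta automatically
  since b is normalized alternating).\<close>
definition is_biresidue :: "nat set \<Rightarrow> (nat \<Rightarrow> nat \<Rightarrow> complex) \<Rightarrow> (nat \<Rightarrow> nat \<Rightarrow> complex) \<Rightarrow> bool" where
  "is_biresidue S lam b \<longleftrightarrow> add_alternating S b \<and> normalized S b \<and>
     (\<forall>z::nat \<Rightarrow> complex. (\<Sum>i\<in>S. z i) = 0 \<longrightarrow>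
        (\<forall>i\<in>S. (\<Sum>j\<in>S. lam i j * (\<Sum>k\<in>S. b j k * z k)) = z i))"

definition biresidue :: "nat set \<Rightarrow> (nat \<Rightarrow> nat \<Rightarrow> complex) \<Rightarrow> (nat \<Rightarrow> nat \<Rightarrow> complex)" where
  "biresidue S lam = (THE b. is_biresidue S lam b \<and> (\<forall>i j. i \<notin> S \<or> j \<notin> S \<longrightarrow> b i j = 0))"

definition theta :: "nat set \<Rightarrow> (nat \<Rightarrow> nat \<Rightarrow> complex) \<Rightarrow> nat \<Rightarrow> nat \<Rightarrow> nat \<Rightarrow> complex" where
  "theta S lam i j k = (let b = biresidue S lam in (b j k + b k i) / b i j)"

definition smoothable :: "nat set \<Rightarrow> (nat \<Rightarrow> nat \<Rightarrow> complex) \<Rightarrow> nat \<Rightarrow> nat \<Rightarrow> bool" where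
  "smoothable S lam i j \<longleftrightarrow> i \<in> S \<and> j \<in> S \<and> i \<noteq> j \<and> biresidue S lam i j \<noteq> 0 \<and>
     (\<forall>k\<in>S - {i, j}. \<exists>m::nat. theta S lam i j k = of_nat m)"

text \<open>Angle i-k-j (vertex k) of the smoothable edge {i,j}.\<close>
definition angle_colored :: "nat set \<Rightarrow> (nat \<Rightarrow> nat \<Rightarrow> complex) \<Rightarrow> nat \<Rightarrow> nat \<Rightarrow> nat \<Rightarrow> bool" where
  "angle_colored S lam i j k \<longleftrightarrow> smoothable S lam i j \<and> k \<in> S - {i, j} \<and> theta S lam i j k \<noteq> 0"

definition angle_dark :: "nat set \<Rightarrow> (nat \<Rightarrow> nat \<Rightarrow> complex) \<Rightarrow> nat \<Rightarrow> nat \<Rightarrow> nat \<Rightarrow> bool" where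
  "angle_dark S lam i j k \<longleftrightarrow> smoothable S lam i j \<and> k \<in> S - {i, j} \<and> theta S lam i j k = 2"

definition angle_light :: "nat set \<Rightarrow> (nat \<Rightarrow> nat \<Rightarrow> complex) \<Rightarrow> nat \<Rightarrow> nat \<Rightarrow> nat \<Rightarrow> bool" where
  "angle_light S lam i j k \<longleftrightarrow> smoothable S lam i j \<and> k \<in> S - {i, j} \<and> theta S lam i j k = 1"

definition smooth_cycle :: "nat set \<Rightarrow> (nat \<Rightarrow> nat \<Rightarrow> complex) \<Rightarrow> nat list \<Rightarrow> bool" where
  "smooth_cycle S lam cs \<longleftrightarrow> distinct cs \<and> length cs \<ge> 3 \<and> set cs \<subseteq> S \<and>
     (\<forall>t < length cs. smoothable S lam (cs ! t) (cs ! ((t + 1) mod length cs)))"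

definition cycle_edge :: "nat list \<Rightarrow> nat \<Rightarrow> nat \<Rightarrow> bool" where
  "cycle_edge cs i j \<longleftrightarrow> (\<exists>t < length cs. {i, j} = {cs ! t, cs ! ((t + 1) mod length cs)})"

end

theory Submission
  imports Defs
begin

text \<open>
  Write b for the biresidue of lam, so that lam b is the projection onto the zero-sum vectors.
  For a vertex k off the cycle, the numerator b(i_{t+1},k) + b(k,i_t) of the angle number at k of
  the t-th cycle edge is a natural multiple of the edge weight b(i_t,i_{t+1}); consecutive weights
  are positive multiples of each other, and the numerators telescope to zero around the cycle.
  Hence all of them vanish: every row of b outside the vertex set I is constant on I. Then b maps
  the zero-sum vectors supported on I onto themselves, and as lam inverts b, the rows of lam
  outside I are constant on I as well. So lam restricted to I is normalized, its kernel consists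
  of the constants, and its biresidue is b restricted to I. A chord of the cycle would cut it
  into two shorter smooth cycles with every other vertex off one of them, so all angle numbers
  of the chord would vanish although they add up to 2. The remaining claims are read off from
  the block structure of b.
\<close>

section \<open>Normalized alternating matrices whose kernel consists of the constants\<close>

lemma alternating_normalized_col_sum:
  assumes "add_alternating S lam" "normalized S lam" "j \<in> S"
  shows "(\<Sum>i\<in>S. lam i j) = 0"
proof -
  have "(\<Sum>i\<in>S. lam i j) = (\<Sum>i\<in>S. - lam j i)"
    using assms(1,3) unfolding add_alternating_def by (intro sum.cong) blast+
  also have "\<dots> = 0" using assms(2,3) unfolding normalized_def by (simp add: sum_negf)
  finally show ?thesis .
qed

lemma alternating_double_sum:
  assumes "finite S" "add_alternating S x"
  shows "(\<Sum>i\<in>S. \<Sum>j\<in>S. x i j) = 0"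
proof -
  have "(\<Sum>i\<in>S. \<Sum>j\<in>S. x i j) = (\<Sum>j\<in>S. \<Sum>i\<in>S. x i j)" by (rule sum.swap)
  also have "\<dots> = (\<Sum>j\<in>S. \<Sum>i\<in>S. - x j i)"
    using assms(2) unfolding add_alternating_def by (intro sum.cong) blast+
  also have "\<dots> = - (\<Sum>i\<in>S. \<Sum>j\<in>S. x i j)" by (simp add: sum_negf)
  finally show ?thesis by simp
qed

lemma const_zero_sum_eq_0:
  fixes y :: "nat \<Rightarrow> complex"
  assumes "finite S" "\<forall>i\<in>S. \<forall>j\<in>S. y i = y j" "(\<Sum>i\<in>S. y i) = 0" "j \<in> S"
  shows "y j = 0"
proof -
  have "(\<Sum>i\<in>S. y i) = (\<Sum>i\<in>S. y j)" using assms(2,4) by (intro sum.cong) blast+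
  then have "(\<Sum>i\<in>S. y i) = of_nat (card S) * y j" by simp
  moreover have "card S \<noteq> 0" using assms(1,4) by auto
  ultimately show ?thesis using assms(3) by simp
qed

definition constant_kernel :: "nat set \<Rightarrow> (nat \<Rightarrow> nat \<Rightarrow> complex) \<Rightarrow> bool" where
  "constant_kernel S x \<longleftrightarrow>
     (\<forall>u. (\<forall>i\<in>S. (\<Sum>j\<in>S. x i j * u j) = 0) \<longrightarrow> (\<forall>i\<in>S. \<forall>j\<in>S. u i = u j))"

definition inj_on_zero_sum :: "nat set \<Rightarrow> (nat \<Rightarrow> nat \<Rightarrow> complex) \<Rightarrow> bool" where
  "inj_on_zero_sum S x \<longleftrightarrow>
     (\<forall>u. (\<Sum>j\<in>S. u j) = 0 \<longrightarrow> (\<forall>i\<in>S. (\<Sum>j\<in>S. x i j * u j) = 0) \<longrightarrow> (\<forall>j\<in>S. u j = 0))"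

lemma constant_kernel_imp_inj_on_zero_sum:
  assumes "finite S" "constant_kernel S x"
  shows "inj_on_zero_sum S x"
  unfolding inj_on_zero_sum_def
proof (intro allI impI ballI)
  fix u j assume "(\<Sum>j\<in>S. u j) = 0" "\<forall>i\<in>S. (\<Sum>j\<in>S. x i j * u j) = 0" "j \<in> S"
  then show "u j = 0"
    using assms const_zero_sum_eq_0[of S u j] unfolding constant_kernel_def by blast
qed

lemma is_biresidue_inj_on_zero_sum:
  assumes "is_biresidue S lam b"
  shows "inj_on_zero_sum S b"
  unfolding inj_on_zero_sum_def
proof (intro allI impI ballI)
  fix u j assume "(\<Sum>j\<in>S. u j) = 0" and bu: "\<forall>i\<in>S. (\<Sum>j\<in>S. b i j * u j) = 0" and "j \<in> S"
  then have "(\<Sum>i\<in>S. lam j i * (\<Sum>k\<in>S. b i k * u k)) = u j"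
    using assms unfolding is_biresidue_def by blast
  then show "u j = 0" using bu by simp
qed

lemma shifted_system_zero_sum:
  assumes "finite S" "S \<noteq> {}" "add_alternating S lam" "normalized S lam"
    and eq: "\<forall>i\<in>S. (\<Sum>j\<in>S. lam i j * u j) + (\<Sum>j\<in>S. u j) = z i"
    and zs: "(\<Sum>i\<in>S. z i) = 0"
  shows "(\<Sum>j\<in>S. u j) = 0" "\<forall>i\<in>S. (\<Sum>j\<in>S. lam i j * u j) = z i"
proof -
  have "(\<Sum>i\<in>S. \<Sum>j\<in>S. lam i j * u j) = (\<Sum>j\<in>S. (\<Sum>i\<in>S. lam i j) * u j)"
    by (subst sum.swap) (simp add: sum_distrib_right)
  also have "\<dots> = 0" using alternating_normalized_col_sum[OF assms(3,4)] by simp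
  finally have "(\<Sum>i\<in>S. (\<Sum>j\<in>S. lam i j * u j) + (\<Sum>j\<in>S. u j)) = of_nat (card S) * (\<Sum>j\<in>S. u j)"
    by (simp add: sum.distrib)
  moreover have "(\<Sum>i\<in>S. z i) = (\<Sum>i\<in>S. (\<Sum>j\<in>S. lam i j * u j) + (\<Sum>j\<in>S. u j))"
    using eq by simp
  ultimately have "(\<Sum>i\<in>S. z i) = of_nat (card S) * (\<Sum>j\<in>S. u j)" by simp
  then show su: "(\<Sum>j\<in>S. u j) = 0" using zs assms(1,2) by simp
  show "\<forall>i\<in>S. (\<Sum>j\<in>S. lam i j * u j) = z i" using eq su by simp
qed

lemma bij_betw_nth_sorted_list_of_set:
  assumes "finite S"
  shows "bij_betw ((!) (sorted_list_of_set S)) {..<card S} S"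
  using bij_betw_nth[of "sorted_list_of_set S"] assms by simp

lemma sum_sorted_list_of_set_reindex:
  assumes "finite S"
  shows "(\<Sum>j\<in>S. g j) = (\<Sum>c<card S. g (sorted_list_of_set S ! c))"
  using sum.reindex_bij_betw[OF bij_betw_nth_sorted_list_of_set[OF assms], of g] by simp

definition set_index :: "nat set \<Rightarrow> nat \<Rightarrow> nat" where
  "set_index S j = inv_into {..<card S} ((!) (sorted_list_of_set S)) j"

lemma set_index_nth:
  "finite S \<Longrightarrow> c < card S \<Longrightarrow> set_index S (sorted_list_of_set S ! c) = c"
  unfolding set_index_def
  by (metis bij_betw_nth_sorted_list_of_set bij_betw_imp_inj_on inv_into_f_f lessThan_iff)

lemma nth_set_index:
  assumes "finite S" "j \<in> S"
  shows "set_index S j < card S" "sorted_list_of_set S ! set_index S j = j"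
  using bij_betw_nth_sorted_list_of_set[OF assms(1)] assms(2) unfolding set_index_def
  by (metis bij_betw_imp_surj_on inv_into_into lessThan_iff,
      metis bij_betw_imp_surj_on f_inv_into_f)

lemma mat_mult_vec_set_index:
  assumes "finite S" "x \<in> carrier_vec (card S)" "i \<in> S"
  shows "(mat (card S) (card S) (\<lambda>(a, c). f (sorted_list_of_set S ! a) (sorted_list_of_set S ! c))
            *\<^sub>v x) $ set_index S i = (\<Sum>j\<in>S. f i j * x $ set_index S j)"
proof -
  let ?s = "sorted_list_of_set S"
  note i = nth_set_index[OF assms(1,3)]
  have "(mat (card S) (card S) (\<lambda>(a, c). f (?s ! a) (?s ! c)) *\<^sub>v x) $ set_index S i
      = (\<Sum>c\<in>{0..<card S}. f i (?s ! c) * x $ c)"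
    using assms(2) i by (simp add: scalar_prod_def)
  also have "\<dots> = (\<Sum>c<card S. f i (?s ! c) * x $ set_index S (?s ! c))"
    using set_index_nth[OF assms(1)] by (simp add: lessThan_atLeast0)
  also have "\<dots> = (\<Sum>j\<in>S. f i j * x $ set_index S j)"
    by (rule sum_sorted_list_of_set_reindex[OF assms(1), symmetric])
  finally show ?thesis .
qed

lemma to_mat_lessThan: "to_mat {..<n} lam = mat n n (\<lambda>(a, c). lam a c)"
  unfolding to_mat_def by (intro eq_matI) (auto simp: lessThan_atLeast0)

definition shifted_mat :: "nat set \<Rightarrow> (nat \<Rightarrow> nat \<Rightarrow> complex) \<Rightarrow> complex mat" where
  "shifted_mat S lam = mat (card S) (card S)
     (\<lambda>(a, c). lam (sorted_list_of_set S ! a) (sorted_list_of_set S ! c) + 1)"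

lemma shifted_mat_carrier: "shifted_mat S lam \<in> carrier_mat (card S) (card S)"
  unfolding shifted_mat_def by simp

lemma shifted_mat_mult_vec:
  assumes "finite S" "x \<in> carrier_vec (card S)" "i \<in> S"
  shows "(shifted_mat S lam *\<^sub>v x) $ set_index S i
           = (\<Sum>j\<in>S. lam i j * x $ set_index S j) + (\<Sum>j\<in>S. x $ set_index S j)"
  using mat_mult_vec_set_index[OF assms, of "\<lambda>i j. lam i j + 1"] unfolding shifted_mat_def
  by (simp add: distrib_right sum.distrib)

lemma det_shifted_mat_nonzero:
  assumes fin: "finite S" and ne: "S \<noteq> {}" and alt: "add_alternating S lam"
    and nrm: "normalized S lam" and ker: "constant_kernel S lam"
  shows "det (shifted_mat S lam) \<noteq> 0"
proof
  assume "det (shifted_mat S lam) = 0"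
  then obtain v where v: "v \<in> carrier_vec (card S)" "v \<noteq> 0\<^sub>v (card S)"
    "shifted_mat S lam *\<^sub>v v = 0\<^sub>v (card S)"
    using det_0_iff_vec_prod_zero_field[OF shifted_mat_carrier] by blast
  define u where "u j = v $ set_index S j" for j
  have "(\<Sum>j\<in>S. lam i j * u j) + (\<Sum>j\<in>S. u j) = 0" if "i \<in> S" for i
    using shifted_mat_mult_vec[OF fin v(1) that, of lam] v(3) nth_set_index[OF fin that]
    unfolding u_def by simp
  then have "(\<Sum>j\<in>S. u j) = 0" "\<forall>i\<in>S. (\<Sum>j\<in>S. lam i j * u j) = 0"
    using shifted_system_zero_sum[OF fin ne alt nrm, of u "\<lambda>_. 0"] by simp_all
  then have u0: "\<forall>j\<in>S. u j = 0"
    using constant_kernel_imp_inj_on_zero_sum[OF fin ker] unfolding inj_on_zero_sum_def by blast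
  have "v = 0\<^sub>v (card S)"
  proof (rule eq_vecI)
    fix c assume "c < dim_vec (0\<^sub>v (card S) :: complex vec)"
    then have c: "c < card S" by simp
    then have "sorted_list_of_set S ! c \<in> S"
      using bij_betw_apply[OF bij_betw_nth_sorted_list_of_set[OF fin]] by simp
    then have "v $ c = 0" using u0 set_index_nth[OF fin c] unfolding u_def by force
    then show "v $ c = 0\<^sub>v (card S) $ c" using c by simp
  qed (use v(1) in simp)
  with v(2) show False ..
qed

lemma constant_kernel_onto_zero_sum:
  assumes fin: "finite S" and ne: "S \<noteq> {}" and alt: "add_alternating S lam"
    and nrm: "normalized S lam" and ker: "constant_kernel S lam" and zs: "(\<Sum>i\<in>S. z i) = 0"
  shows "\<exists>u. (\<Sum>j\<in>S. u j) = 0 \<and> (\<forall>i\<in>S. (\<Sum>j\<in>S. lam i j * u j) = z i)"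
proof -
  let ?N = "card S" and ?M = "shifted_mat S lam"
  have "?M \<in> Units (ring_mat TYPE(complex) ?N ())"
    by (rule det_non_zero_imp_unit[OF shifted_mat_carrier det_shifted_mat_nonzero[OF assms(1-5)]])
  then obtain B where B: "B \<in> carrier_mat ?N ?N" "?M * B = 1\<^sub>m ?N"
    unfolding Units_def ring_mat_def by auto
  define w where "w = vec ?N (\<lambda>a. z (sorted_list_of_set S ! a))"
  define x where "x = B *\<^sub>v w"
  have w: "w \<in> carrier_vec ?N" unfolding w_def by simp
  have x: "x \<in> carrier_vec ?N" unfolding x_def using B w by simp
  have "?M *\<^sub>v x = w" unfolding x_def
    using assoc_mult_mat_vec[OF shifted_mat_carrier B(1) w, symmetric] B(2) w by simp
  then have "\<forall>i\<in>S. (\<Sum>j\<in>S. lam i j * x $ set_index S j) + (\<Sum>j\<in>S. x $ set_index S j) = z i"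
    using shifted_mat_mult_vec[OF fin x, of _ lam] nth_set_index[OF fin] unfolding w_def by simp
  from shifted_system_zero_sum[OF fin ne alt nrm this zs] show ?thesis by blast
qed

lemma det_to_mat_eq_0:
  assumes fin: "finite S" and ne: "S \<noteq> {}" and nrm: "normalized S lam"
  shows "det (to_mat S lam) = 0"
proof -
  let ?N = "card S" and ?s = "sorted_list_of_set S" and ?A = "to_mat S lam"
  define one where "one = vec ?N (\<lambda>_. 1 :: complex)"
  have "0 < ?N" using fin ne by (simp add: card_gt_0_iff)
  then have one: "one \<in> carrier_vec ?N" "one \<noteq> 0\<^sub>v ?N"
    unfolding one_def by (auto dest!: arg_cong[of _ _ "\<lambda>v. v $ 0"])
  have "?A *\<^sub>v one = 0\<^sub>v ?N"
  proof (rule eq_vecI)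
    fix c assume "c < dim_vec (0\<^sub>v ?N :: complex vec)"
    then have c: "c < ?N" by simp
    then have sc: "?s ! c \<in> S"
      using bij_betw_apply[OF bij_betw_nth_sorted_list_of_set[OF fin]] by simp
    have "(?A *\<^sub>v one) $ set_index S (?s ! c) = (\<Sum>j\<in>S. lam (?s ! c) j)"
      using mat_mult_vec_set_index[OF fin one(1) sc, of lam] nth_set_index[OF fin]
      unfolding to_mat_def one_def by simp
    then show "(?A *\<^sub>v one) $ c = 0\<^sub>v ?N $ c"
      using nrm sc c set_index_nth[OF fin c] unfolding normalized_def by simp
  qed (simp add: to_mat_def)
  then show ?thesis using det_0_iff_vec_prod_zero_field[of ?A ?N] one unfolding to_mat_def by auto
qed

text \<open>The rank is at least N - 1 because adding the rank-one all-ones matrix makes it invertible.\<close>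
lemma mrank_if_constant_kernel:
  assumes fin: "finite S" and ne: "S \<noteq> {}" and alt: "add_alternating S lam"
    and nrm: "normalized S lam" and ker: "constant_kernel S lam"
  shows "mrank S lam = card S - 1"
proof -
  let ?N = "card S" and ?A = "to_mat S lam" and ?J = "mat (card S) (card S) (\<lambda>_. 1 :: complex)"
  have A: "?A \<in> carrier_mat ?N ?N" unfolding to_mat_def by simp
  have J: "?J \<in> carrier_mat ?N ?N" by simp
  have "shifted_mat S lam = ?A + ?J" unfolding shifted_mat_def to_mat_def by (intro eq_matI) auto
  moreover have "vec_space.rank ?N (shifted_mat S lam) = ?N"
    using vec_space.det_rank_iff[OF shifted_mat_carrier] det_shifted_mat_nonzero[OF assms] by simp
  moreover have "vec_space.rank ?N ?J \<le> 1"
    by (rule vec_space.rank_le_1_product_entries[OF J, of "\<lambda>_. 1" "\<lambda>_. 1"]) auto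
  ultimately have "?N \<le> vec_space.rank ?N ?A + 1"
    using vec_space.rank_subadditive[OF A J] by simp
  moreover have "vec_space.rank ?N ?A < ?N"
    using vec_space.det_zero_low_rank[OF A] det_to_mat_eq_0[OF fin ne nrm] by blast
  ultimately show ?thesis unfolding mrank_def by simp
qed

lemma rank_sum_outer_le:
  fixes col row :: "nat \<Rightarrow> nat \<Rightarrow> complex"
  assumes "finite F"
  shows "vec_space.rank n (mat n n (\<lambda>(i, l). \<Sum>j\<in>F. col j i * row j l)) \<le> card F"
  using assms
proof (induction F rule: finite_induct)
  case empty
  have "mat n n (\<lambda>(i, l). \<Sum>j\<in>{}. col j i * row j l) = (0\<^sub>m n n :: complex mat)"
    by (rule eq_matI) auto
  then show ?case using vec_space.rank_0I[of n n] by (simp only:) simp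
next
  case (insert x F)
  let ?A = "mat n n (\<lambda>(i, l). col x i * row x l)"
  let ?B = "mat n n (\<lambda>(i, l). \<Sum>j\<in>F. col j i * row j l)"
  have A: "?A \<in> carrier_mat n n" and B: "?B \<in> carrier_mat n n" by auto
  have "mat n n (\<lambda>(i, l). \<Sum>j\<in>insert x F. col j i * row j l) = ?A + ?B"
    using insert by (intro eq_matI) auto
  moreover have "vec_space.rank n ?A \<le> 1"
    by (rule vec_space.rank_le_1_product_entries[OF A, of "col x" "row x"]) auto
  ultimately show ?case
    using vec_space.rank_subadditive[OF A B] insert by simp
qed

lemma nonconstant_kernel_columns:
  assumes nrm: "normalized {..<n} lam" and ker: "\<forall>i<n. (\<Sum>j<n. lam i j * u j) = 0"
    and pq: "p < n" "q < n" "u p \<noteq> u q" and i: "i < n"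
  defines "\<alpha> \<equiv> \<lambda>j. (u q - u j) / (u p - u q)"
  shows "lam i p = (\<Sum>j\<in>{..<n} - {p, q}. lam i j * \<alpha> j)"
    and "lam i q = (\<Sum>j\<in>{..<n} - {p, q}. lam i j * (- \<alpha> j - 1))"
proof -
  define J where "J = {..<n} - {p, q}"
  define d where "d = u p - u q"
  have d: "d \<noteq> 0" unfolding d_def using pq by simp
  have split: "(\<Sum>j<n. g j) = g p + g q + (\<Sum>j\<in>J. g j)" for g :: "nat \<Rightarrow> complex"
  proof -
    have U: "{..<n} = insert p (insert q J)" and "p \<notin> insert q J" "q \<notin> J" "finite J"
      unfolding J_def using pq by auto
    then show ?thesis by (subst U) (simp add: add.assoc)
  qed
  have rowsum: "(\<Sum>j<n. lam i j) = 0" using nrm i unfolding normalized_def by simp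
  have "(\<Sum>j<n. lam i j * (u q - u j)) = u q * (\<Sum>j<n. lam i j) - (\<Sum>j<n. lam i j * u j)"
    by (simp add: algebra_simps sum_subtractf sum_distrib_left)
  then have "(\<Sum>j<n. lam i j * (u q - u j)) = 0" using rowsum ker i by simp
  then have "(\<Sum>j\<in>J. lam i j * (u q - u j)) = lam i p * d"
    using split[of "\<lambda>j. lam i j * (u q - u j)"] unfolding d_def by (simp add: algebra_simps)
  then show col_p: "lam i p = (\<Sum>j\<in>{..<n} - {p, q}. lam i j * \<alpha> j)"
    using d unfolding \<alpha>_def J_def d_def by (simp add: sum_divide_distrib[symmetric])
  have "lam i p + (lam i q + (\<Sum>j\<in>J. lam i j)) = 0"
    using rowsum split[of "lam i"] by (simp add: add.assoc)
  then have "- lam i p = lam i q + (\<Sum>j\<in>J. lam i j)" by (metis add.right_inverse add_minus_cancel)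
  then show "lam i q = (\<Sum>j\<in>{..<n} - {p, q}. lam i j * (- \<alpha> j - 1))"
    using col_p unfolding J_def by (simp add: algebra_simps sum_subtractf sum_negf)
qed

lemma to_mat_factor_if_nonconstant_kernel:
  assumes nrm: "normalized {..<n} lam" and ker: "\<forall>i<n. (\<Sum>j<n. lam i j * u j) = 0"
    and pq: "p < n" "q < n" "u p \<noteq> u q"
  shows "\<exists>row. to_mat {..<n} lam = mat n n (\<lambda>(i, l). \<Sum>j\<in>{..<n} - {p, q}. lam i j * row j l)"
proof -
  define J where "J = {..<n} - {p, q}"
  define \<alpha> where "\<alpha> j = (u q - u j) / (u p - u q)" for j
  define row where "row j l = (if l = j then 1 else if l = p then \<alpha> j
      else if l = q then - \<alpha> j - 1 else 0)" for j l
  note cols = nonconstant_kernel_columns[OF nrm ker pq]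
  have "lam i l = (\<Sum>j\<in>J. lam i j * row j l)" if "i < n" "l < n" for i l
  proof -
    consider "l \<in> J" | "l = p" | "l = q" using \<open>l < n\<close> unfolding J_def by blast
    then show ?thesis
    proof cases
      case 1
      then have "(\<Sum>j\<in>J. lam i j * row j l) = (\<Sum>j\<in>J. if j = l then lam i j else 0)"
        unfolding row_def J_def by (intro sum.cong) auto
      then show ?thesis using 1 unfolding J_def by simp
    next
      case 2
      then have "(\<Sum>j\<in>J. lam i j * row j l) = (\<Sum>j\<in>J. lam i j * \<alpha> j)"
        unfolding row_def J_def by (intro sum.cong) auto
      then show ?thesis using cols(1)[OF \<open>i < n\<close>] 2 unfolding J_def \<alpha>_def by simp
    next
      case 3
      then have "(\<Sum>j\<in>J. lam i j * row j l) = (\<Sum>j\<in>J. lam i j * (- \<alpha> j - 1))"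
        using pq unfolding row_def J_def by (intro sum.cong) auto
      then show ?thesis using cols(2)[OF \<open>i < n\<close>] 3 unfolding J_def \<alpha>_def by simp
    qed
  qed
  then have "to_mat {..<n} lam = mat n n (\<lambda>(i, l). \<Sum>j\<in>J. lam i j * row j l)"
    unfolding to_mat_lessThan by (intro eq_matI) auto
  then show ?thesis unfolding J_def by blast
qed

lemma constant_kernel_if_mrank:
  assumes nrm: "normalized {..<n} lam" and rk: "mrank {..<n} lam = n - 1"
  shows "constant_kernel {..<n} lam"
  unfolding constant_kernel_def
proof (intro allI impI ballI, rule ccontr)
  fix u p q
  assume ker: "\<forall>i\<in>{..<n}. (\<Sum>j\<in>{..<n}. lam i j * u j) = 0" and p: "p \<in> {..<n}" and q: "q \<in> {..<n}"
    and ne: "u p \<noteq> u q"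
  then obtain row where "to_mat {..<n} lam = mat n n (\<lambda>(i, l). \<Sum>j\<in>{..<n} - {p, q}. lam i j * row j l)"
    using to_mat_factor_if_nonconstant_kernel[OF nrm, of u p q] by auto
  then have "mrank {..<n} lam \<le> card ({..<n} - {p, q})"
    unfolding mrank_def card_lessThan using rank_sum_outer_le[of _ n "\<lambda>j i. lam i j" row] by simp
  moreover have "p \<noteq> q" using ne by auto
  then have "card ({..<n} - {p, q}) = n - 2" "2 \<le> n" using p q by (auto simp: card_Diff_subset)
  ultimately show False using rk by simp
qed

section \<open>Biresidues\<close>

text \<open>If lam b is the projection onto the zero-sum vectors, then b equals minus its transpose
  times lam b, and that matrix is alternating because lam is.\<close>
lemma alternating_if_right_inverse:
  assumes fin: "finite S" and alt: "add_alternating S lam"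
    and col: "\<forall>k\<in>S. (\<Sum>j\<in>S. b j k) = 0"
    and inv: "\<forall>i\<in>S. \<forall>k\<in>S. (\<Sum>j\<in>S. lam i j * b j k) = (if i = k then 1 else 0) - 1 / of_nat (card S)"
  shows "add_alternating S b"
proof -
  have F: "b p q = (\<Sum>a\<in>S. \<Sum>c\<in>S. lam a c * b c p * b a q)" if "p \<in> S" "q \<in> S" for p q
  proof -
    have "(\<Sum>a\<in>S. \<Sum>c\<in>S. lam a c * b c p * b a q) = (\<Sum>a\<in>S. (\<Sum>c\<in>S. lam a c * b c p) * b a q)"
      by (simp add: sum_distrib_right)
    also have "\<dots> = (\<Sum>a\<in>S. (if a = p then b a q else 0) - b a q / of_nat (card S))"
      using inv that by (intro sum.cong) (auto simp: left_diff_distrib)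
    also have "\<dots> = b p q"
      using that fin col by (simp add: sum_subtractf sum_divide_distrib[symmetric])
    finally show ?thesis by simp
  qed
  show ?thesis unfolding add_alternating_def
  proof (intro ballI)
    fix p q assume pq: "p \<in> S" "q \<in> S"
    have "b p q = (\<Sum>a\<in>S. \<Sum>c\<in>S. lam a c * b c p * b a q)" by (rule F[OF pq])
    also have "\<dots> = (\<Sum>c\<in>S. \<Sum>a\<in>S. lam a c * b c p * b a q)" by (rule sum.swap)
    also have "\<dots> = (\<Sum>c\<in>S. \<Sum>a\<in>S. - (lam c a * b a q * b c p))"
    proof (intro sum.cong refl)
      fix a c assume "a \<in> S" "c \<in> S"
      then have "lam a c = - lam c a" using alt unfolding add_alternating_def by blast
      then show "lam a c * b c p * b a q = - (lam c a * b a q * b c p)" by simp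
    qed
    also have "\<dots> = - (\<Sum>c\<in>S. \<Sum>a\<in>S. lam c a * b a q * b c p)" by (simp add: sum_negf)
    also have "\<dots> = - b q p" using F[OF pq(2,1)] by simp
    finally show "b q p = - b p q" by simp
  qed
qed

lemma is_biresidue_exists:
  assumes fin: "finite S" and ne: "S \<noteq> {}" and alt: "add_alternating S lam"
    and nrm: "normalized S lam" and ker: "constant_kernel S lam"
  shows "\<exists>b. is_biresidue S lam b \<and> (\<forall>i j. i \<notin> S \<or> j \<notin> S \<longrightarrow> b i j = 0)"
proof -
  define e where "e k i = ((if i = k then 1 else 0) - 1 / of_nat (card S) :: complex)" for k i :: nat
  have "(\<Sum>i\<in>S. e k i) = 0" if "k \<in> S" for k
    using that fin ne unfolding e_def by (simp add: sum_subtractf)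
  then have "\<forall>k. \<exists>u. k \<in> S \<longrightarrow> (\<Sum>j\<in>S. u j) = 0 \<and> (\<forall>i\<in>S. (\<Sum>j\<in>S. lam i j * u j) = e k i)"
    using constant_kernel_onto_zero_sum[OF fin ne alt nrm ker] by blast
  then obtain U where U: "\<And>k. k \<in> S \<Longrightarrow>
      (\<Sum>j\<in>S. U k j) = 0 \<and> (\<forall>i\<in>S. (\<Sum>j\<in>S. lam i j * U k j) = e k i)"
    by metis
  define b where "b j k = (if j \<in> S \<and> k \<in> S then U k j else 0)" for j k
  have col: "\<forall>k\<in>S. (\<Sum>j\<in>S. b j k) = 0" using U unfolding b_def by simp
  have lam_b: "\<forall>i\<in>S. \<forall>k\<in>S. (\<Sum>j\<in>S. lam i j * b j k) = e k i" using U unfolding b_def by simp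
  have alt_b: "add_alternating S b"
    using alternating_if_right_inverse[OF fin alt col] lam_b unfolding e_def by simp
  have nrm_b: "normalized S b" unfolding normalized_def
  proof
    fix j assume j: "j \<in> S"
    have "(\<Sum>k\<in>S. b j k) = (\<Sum>k\<in>S. - b k j)"
      using alt_b j unfolding add_alternating_def by (intro sum.cong) blast+
    then show "(\<Sum>k\<in>S. b j k) = 0" using col j by (simp add: sum_negf)
  qed
  have "(\<Sum>j\<in>S. lam i j * (\<Sum>k\<in>S. b j k * z k)) = z i"
    if zs: "(\<Sum>i\<in>S. z i) = 0" and i: "i \<in> S" for z i
  proof -
    have "(\<Sum>j\<in>S. lam i j * (\<Sum>k\<in>S. b j k * z k)) = (\<Sum>j\<in>S. \<Sum>k\<in>S. lam i j * b j k * z k)"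
      by (simp add: sum_distrib_left mult.assoc)
    also have "\<dots> = (\<Sum>k\<in>S. (\<Sum>j\<in>S. lam i j * b j k) * z k)"
      by (subst sum.swap) (simp add: sum_distrib_right)
    also have "\<dots> = (\<Sum>k\<in>S. e k i * z k)" using lam_b i by simp
    also have "\<dots> = (\<Sum>k\<in>S. (if k = i then z k else 0) - z k / of_nat (card S))"
      unfolding e_def by (intro sum.cong) (auto simp: left_diff_distrib)
    also have "\<dots> = z i" using i fin zs by (simp add: sum_subtractf sum_divide_distrib[symmetric])
    finally show ?thesis .
  qed
  then have "is_biresidue S lam b" using alt_b nrm_b unfolding is_biresidue_def by blast
  then show ?thesis unfolding b_def by auto
qed

lemma sum_mult_delta_diff:
  fixes h :: "nat \<Rightarrow> complex"
  assumes "finite S" "l \<in> S" "k \<in> S"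
  shows "(\<Sum>x\<in>S. h x * ((if x = l then 1 else 0) - (if x = k then 1 else 0))) = h l - h k"
proof -
  have "(\<Sum>x\<in>S. h x * ((if x = l then 1 else 0) - (if x = k then 1 else 0)))
      = (\<Sum>x\<in>S. (if x = l then h x else 0) - (if x = k then h x else 0))"
    by (intro sum.cong) (auto simp: right_diff_distrib)
  also have "\<dots> = h l - h k" using assms by (simp add: sum_subtractf)
  finally show ?thesis .
qed

lemma eq_0_if_zero_on_zero_sum:
  fixes D :: "nat \<Rightarrow> nat \<Rightarrow> complex"
  assumes fin: "finite S" and nrm: "normalized S D"
    and zero: "\<forall>z. (\<Sum>k\<in>S. z k) = 0 \<longrightarrow> (\<forall>j\<in>S. (\<Sum>k\<in>S. D j k * z k) = 0)"
    and j: "j \<in> S" and k: "k \<in> S"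
  shows "D j k = 0"
proof -
  have "D j l = D j k" if l: "l \<in> S" for l
  proof -
    define z where "z x = (if x = l then 1 else 0) - (if x = k then 1 else (0::complex))" for x
    have "(\<Sum>x\<in>S. z x) = 0" and "(\<Sum>x\<in>S. D j x * z x) = D j l - D j k"
      using sum_mult_delta_diff[OF fin l k, of "\<lambda>_. 1"] sum_mult_delta_diff[OF fin l k, of "D j"]
      unfolding z_def by simp_all
    then show ?thesis using zero j by simp
  qed
  then have "(\<Sum>l\<in>S. D j l) = of_nat (card S) * D j k" by simp
  moreover have "(\<Sum>l\<in>S. D j l) = 0" using nrm j unfolding normalized_def by blast
  moreover have "card S \<noteq> 0" using fin k by auto
  ultimately show ?thesis by simp
qed

lemma is_biresidue_unique:
  assumes fin: "finite S" and ker: "constant_kernel S lam"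
    and b1: "is_biresidue S lam b1" and b2: "is_biresidue S lam b2" and "p \<in> S" "q \<in> S"
  shows "b1 p q = b2 p q"
proof -
  define D where "D j k = b1 j k - b2 j k" for j k
  have nb: "add_alternating S b1" "normalized S b1" "add_alternating S b2" "normalized S b2"
    using b1 b2 unfolding is_biresidue_def by auto
  have "normalized S D" using nb(2,4) unfolding normalized_def D_def by (simp add: sum_subtractf)
  moreover have "\<forall>j\<in>S. (\<Sum>k\<in>S. D j k * z k) = 0" if zs: "(\<Sum>k\<in>S. z k) = 0" for z
  proof -
    define y where "y j = (\<Sum>k\<in>S. D j k * z k)" for j
    have "(\<Sum>j\<in>S. y j) = (\<Sum>k\<in>S. ((\<Sum>j\<in>S. b1 j k) - (\<Sum>j\<in>S. b2 j k)) * z k)"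
      unfolding y_def D_def by (subst sum.swap) (simp add: sum_distrib_right sum_subtractf left_diff_distrib)
    also have "\<dots> = 0" using alternating_normalized_col_sum nb by simp
    finally have "(\<Sum>j\<in>S. y j) = 0" .
    moreover have "\<forall>i\<in>S. (\<Sum>j\<in>S. lam i j * y j) = 0"
    proof
      fix i assume "i \<in> S"
      then have "(\<Sum>j\<in>S. lam i j * (\<Sum>k\<in>S. b1 j k * z k)) = z i"
        "(\<Sum>j\<in>S. lam i j * (\<Sum>k\<in>S. b2 j k * z k)) = z i"
        using b1 b2 zs unfolding is_biresidue_def by blast+
      then show "(\<Sum>j\<in>S. lam i j * y j) = 0"
        unfolding y_def D_def by (simp add: left_diff_distrib right_diff_distrib sum_subtractf)
    qed
    ultimately have "\<forall>j\<in>S. y j = 0"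
      using constant_kernel_imp_inj_on_zero_sum[OF fin ker] unfolding inj_on_zero_sum_def by blast
    then show ?thesis unfolding y_def .
  qed
  ultimately have "D p q = 0" using eq_0_if_zero_on_zero_sum[OF fin] assms(5,6) by blast
  then show ?thesis unfolding D_def by simp
qed

lemma is_biresidue_biresidue:
  assumes "finite S" "S \<noteq> {}" "add_alternating S lam" "normalized S lam" "constant_kernel S lam"
  shows "is_biresidue S lam (biresidue S lam)"
proof -
  obtain b where b: "is_biresidue S lam b" "\<forall>i j. i \<notin> S \<or> j \<notin> S \<longrightarrow> b i j = 0"
    using is_biresidue_exists[OF assms] by blast
  have "biresidue S lam = b"
    unfolding biresidue_def
  proof (rule the_equality)
    fix b' assume b': "is_biresidue S lam b' \<and> (\<forall>i j. i \<notin> S \<or> j \<notin> S \<longrightarrow> b' i j = 0)"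
    show "b' = b"
    proof (intro ext)
      fix i j show "b' i j = b i j"
      proof (cases "i \<in> S \<and> j \<in> S")
        case True
        then show ?thesis using is_biresidue_unique[OF assms(1,5) conjunct1[OF b'] b(1)] by simp
      next
        case False
        then show ?thesis using b(2) b' by auto
      qed
    qed
  qed (use b in simp)
  with b show ?thesis by simp
qed

lemma biresidue_eq_on:
  assumes "finite S" "S \<noteq> {}" "add_alternating S lam" "normalized S lam" "constant_kernel S lam"
    and "is_biresidue S lam b" "i \<in> S" "j \<in> S"
  shows "biresidue S lam i j = b i j"
  using is_biresidue_unique[OF assms(1,5) is_biresidue_biresidue[OF assms(1-5)] assms(6-8)] .

section \<open>Rows constant on a block\<close>

definition block_const :: "nat set \<Rightarrow> nat set \<Rightarrow> (nat \<Rightarrow> nat \<Rightarrow> complex) \<Rightarrow> bool" where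
  "block_const V I x \<longleftrightarrow> (\<forall>k\<in>V - I. \<forall>i\<in>I. \<forall>i'\<in>I. x k i = x k i')"

lemma sum_zero_extension:
  fixes h g :: "nat \<Rightarrow> complex"
  assumes "finite V" "I \<subseteq> V"
  shows "(\<Sum>j\<in>V. h j * (if j \<in> I then g j else 0)) = (\<Sum>j\<in>I. h j * g j)"
proof -
  have "(\<Sum>j\<in>V. h j * (if j \<in> I then g j else 0)) = (\<Sum>j\<in>V. if j \<in> I then h j * g j else 0)"
    by (intro sum.cong) auto
  also have "\<dots> = (\<Sum>j\<in>I. h j * g j)"
    using sum.inter_restrict[OF assms(1), of "\<lambda>j. h j * g j" I] assms(2) by (simp add: Int_absorb1)
  finally show ?thesis .
qed

lemma block_const_mult_zero_extension:
  fixes y :: "nat \<Rightarrow> complex"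
  assumes fin: "finite V" and IV: "I \<subseteq> V" and blk: "block_const V I x"
    and ys: "(\<Sum>i\<in>I. y i) = 0" and a: "a \<in> V"
  shows "(\<Sum>k\<in>V. x a k * (if k \<in> I then y k else 0)) = (if a \<in> I then (\<Sum>k\<in>I. x a k * y k) else 0)"
proof (cases "a \<in> I")
  case False
  have "(\<Sum>k\<in>I. x a k * y k) = 0"
  proof (cases "I = {}")
    case False
    then obtain i0 where i0: "i0 \<in> I" by blast
    have "(\<Sum>k\<in>I. x a k * y k) = (\<Sum>k\<in>I. x a i0 * y k)"
    proof (rule sum.cong[OF refl])
      fix k assume "k \<in> I"
      then have "x a k = x a i0" using blk a \<open>a \<notin> I\<close> i0 unfolding block_const_def by blast
      then show "x a k * y k = x a i0 * y k" by simp
    qed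
    then show ?thesis using ys by (simp add: sum_distrib_left[symmetric])
  qed simp
  then show ?thesis using sum_zero_extension[OF fin IV] False by simp
qed (use sum_zero_extension[OF fin IV] in simp)

lemma normalized_restrict:
  assumes fin: "finite V" and IV: "I \<subseteq> V" and ne: "I \<noteq> {}"
    and alt: "add_alternating V x" and nrm: "normalized V x" and blk: "block_const V I x"
  shows "normalized I x"
proof -
  obtain i0 where i0: "i0 \<in> I" using ne by blast
  define c where "c = (\<Sum>k\<in>V - I. x k i0)"
  have finI: "finite I" using fin IV finite_subset by blast
  have rs: "(\<Sum>j\<in>I. x i j) = c" if i: "i \<in> I" for i
  proof -
    have iV: "i \<in> V" using i IV by auto
    have "(\<Sum>j\<in>V - I. x i j) = (\<Sum>j\<in>V - I. - x j i0)"
    proof (rule sum.cong[OF refl])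
      fix j assume j: "j \<in> V - I"
      have "x i j = - x j i" using alt iV j unfolding add_alternating_def by blast
      also have "x j i = x j i0" using blk j i i0 unfolding block_const_def by blast
      finally show "x i j = - x j i0" .
    qed
    moreover have "(\<Sum>j\<in>V. x i j) = (\<Sum>j\<in>V - I. x i j) + (\<Sum>j\<in>I. x i j)"
      using sum.subset_diff[OF IV fin] by simp
    moreover have "(\<Sum>j\<in>V. x i j) = 0" using nrm iV unfolding normalized_def by blast
    ultimately show ?thesis unfolding c_def by (simp add: sum_negf add_eq_0_iff2)
  qed
  have "add_alternating I x" using alt IV unfolding add_alternating_def by blast
  then have "(\<Sum>i\<in>I. \<Sum>j\<in>I. x i j) = 0" using alternating_double_sum[OF finI] by blast
  moreover have "(\<Sum>i\<in>I. \<Sum>j\<in>I. x i j) = of_nat (card I) * c" using rs by simp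
  moreover have "card I \<noteq> 0" using finI ne by simp
  ultimately have "c = 0" by simp
  then show ?thesis unfolding normalized_def using rs by simp
qed

lemma constant_kernel_restrict:
  assumes fin: "finite V" and IV: "I \<subseteq> V" and ne: "I \<noteq> {}"
    and nrm: "normalized I x" and blk: "block_const V I x" and inj: "inj_on_zero_sum V x"
  shows "constant_kernel I x"
  unfolding constant_kernel_def
proof (intro allI impI ballI)
  fix y i j assume ker: "\<forall>i\<in>I. (\<Sum>j\<in>I. x i j * y j) = 0" and "i \<in> I" "j \<in> I"
  have finI: "finite I" using fin IV finite_subset by blast
  define \<mu> where "\<mu> = (\<Sum>j\<in>I. y j) / of_nat (card I)"
  define Y where "Y j = (if j \<in> I then y j - \<mu> else 0)" for j
  have sI: "(\<Sum>j\<in>I. y j - \<mu>) = 0"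
    using finI ne unfolding \<mu>_def by (simp add: sum_subtractf)
  then have "(\<Sum>j\<in>V. Y j) = 0"
    using sum_zero_extension[OF fin IV, of "\<lambda>_. 1"] unfolding Y_def by simp
  moreover have "\<forall>a\<in>V. (\<Sum>k\<in>V. x a k * Y k) = 0"
  proof
    fix a assume a: "a \<in> V"
    have "(\<Sum>k\<in>I. x a k * (y k - \<mu>)) = 0" if "a \<in> I"
    proof -
      have "(\<Sum>k\<in>I. x a k * (y k - \<mu>)) = (\<Sum>k\<in>I. x a k * y k) - \<mu> * (\<Sum>k\<in>I. x a k)"
        by (simp add: right_diff_distrib sum_subtractf sum_distrib_left mult.commute)
      then show ?thesis using ker nrm that unfolding normalized_def by simp
    qed
    then show "(\<Sum>k\<in>V. x a k * Y k) = 0"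
      using block_const_mult_zero_extension[OF fin IV blk sI a] unfolding Y_def by simp
  qed
  ultimately have "\<forall>k\<in>V. Y k = 0" using inj unfolding inj_on_zero_sum_def by blast
  then have "Y i = 0" "Y j = 0" using \<open>i \<in> I\<close> \<open>j \<in> I\<close> IV by blast+
  then show "y i = y j" using \<open>i \<in> I\<close> \<open>j \<in> I\<close> unfolding Y_def by simp
qed

lemma is_biresidue_restrict:
  assumes fin: "finite V" and IV: "I \<subseteq> V" and bres: "is_biresidue V lam b"
    and blk: "block_const V I b" and nrm: "normalized I b"
  shows "is_biresidue I lam b"
  unfolding is_biresidue_def
proof (intro conjI allI impI ballI)
  show "add_alternating I b" using bres IV unfolding is_biresidue_def add_alternating_def by blast
  show "normalized I b" by (rule nrm)
  fix z :: "nat \<Rightarrow> complex" and i assume zs: "(\<Sum>i\<in>I. z i) = 0" and i: "i \<in> I"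
  define Z where "Z k = (if k \<in> I then z k else 0)" for k
  have "(\<Sum>k\<in>V. Z k) = 0" using sum_zero_extension[OF fin IV, of "\<lambda>_. 1" z] zs unfolding Z_def by simp
  then have "(\<Sum>j\<in>V. lam i j * (\<Sum>k\<in>V. b j k * Z k)) = z i"
    using bres i IV unfolding is_biresidue_def Z_def by auto
  moreover have "(\<Sum>j\<in>V. lam i j * (\<Sum>k\<in>V. b j k * Z k))
      = (\<Sum>j\<in>V. lam i j * (if j \<in> I then \<Sum>k\<in>I. b j k * z k else 0))"
    using block_const_mult_zero_extension[OF fin IV blk zs] unfolding Z_def by (intro sum.cong) auto
  ultimately show "(\<Sum>j\<in>I. lam i j * (\<Sum>k\<in>I. b j k * z k)) = z i"
    using sum_zero_extension[OF fin IV] by simp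
qed

text \<open>b maps the zero-sum vectors supported on I onto themselves; applying lam, which inverts b,
  shows that lam also maps them to vectors supported on I.\<close>
lemma block_const_lam_if_block_const_biresidue:
  assumes fin: "finite V" and IV: "I \<subseteq> V" and ne: "I \<noteq> {}"
    and bres: "is_biresidue V lam b" and blk: "block_const V I b"
  shows "block_const V I lam"
proof -
  have finI: "finite I" using fin IV finite_subset by blast
  have altV: "add_alternating V b" and nrmV: "normalized V b"
    using bres unfolding is_biresidue_def by auto
  have altI: "add_alternating I b" using altV IV unfolding add_alternating_def by blast
  have nrmI: "normalized I b" by (rule normalized_restrict[OF fin IV ne altV nrmV blk])
  have kerI: "constant_kernel I b"
    by (rule constant_kernel_restrict[OF fin IV ne nrmI blk is_biresidue_inj_on_zero_sum[OF bres]])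
  have kills: "(\<Sum>i\<in>I. lam k i * z i) = 0"
    if zs: "(\<Sum>i\<in>I. z i) = 0" and k: "k \<in> V - I" for z :: "nat \<Rightarrow> complex" and k
  proof -
    obtain y where y: "(\<Sum>j\<in>I. y j) = 0" "\<forall>a\<in>I. (\<Sum>c\<in>I. b a c * y c) = z a"
      using constant_kernel_onto_zero_sum[OF finI ne altI nrmI kerI zs] by blast
    define Y where "Y c = (if c \<in> I then y c else 0)" for c
    have "(\<Sum>c\<in>V. Y c) = 0" using sum_zero_extension[OF fin IV, of "\<lambda>_. 1" y] y(1) unfolding Y_def by simp
    then have "(\<Sum>a\<in>V. lam k a * (\<Sum>c\<in>V. b a c * Y c)) = Y k"
      using bres k unfolding is_biresidue_def by blast
    moreover have "(\<Sum>c\<in>V. b a c * Y c) = (if a \<in> I then z a else 0)" if "a \<in> V" for a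
      using block_const_mult_zero_extension[OF fin IV blk y(1) that] y(2) unfolding Y_def by simp
    ultimately show ?thesis using sum_zero_extension[OF fin IV] k unfolding Y_def by (simp cong: sum.cong)
  qed
  show ?thesis unfolding block_const_def
  proof (intro ballI)
    fix k i i' assume k: "k \<in> V - I" and i: "i \<in> I" and i': "i' \<in> I"
    define z where "z a = (if a = i then 1 else 0) - (if a = i' then 1 else (0::complex))" for a
    have "(\<Sum>a\<in>I. z a) = 0" and "(\<Sum>a\<in>I. lam k a * z a) = lam k i - lam k i'"
      using sum_mult_delta_diff[OF finI i i', of "\<lambda>_. 1"] sum_mult_delta_diff[OF finI i i', of "lam k"]
      unfolding z_def by simp_all
    then show "lam k i = lam k i'" using kills[OF _ k] by simp
  qed
qed

section \<open>Smooth edges and smooth cycles\<close>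

text \<open>The notions of the smoothing diagram, stated for an arbitrary matrix b in place of the
  biresidue of lam.\<close>
definition theta_of :: "(nat \<Rightarrow> nat \<Rightarrow> complex) \<Rightarrow> nat \<Rightarrow> nat \<Rightarrow> nat \<Rightarrow> complex" where
  "theta_of b i j k = (b j k + b k i) / b i j"

definition smooth_edge :: "nat set \<Rightarrow> (nat \<Rightarrow> nat \<Rightarrow> complex) \<Rightarrow> nat \<Rightarrow> nat \<Rightarrow> bool" where
  "smooth_edge S b i j \<longleftrightarrow> i \<in> S \<and> j \<in> S \<and> i \<noteq> j \<and> b i j \<noteq> 0 \<and>
     (\<forall>k\<in>S - {i, j}. \<exists>m::nat. theta_of b i j k = of_nat m)"

definition is_smooth_cycle :: "nat set \<Rightarrow> (nat \<Rightarrow> nat \<Rightarrow> complex) \<Rightarrow> nat list \<Rightarrow> bool" where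
  "is_smooth_cycle S b cs \<longleftrightarrow> distinct cs \<and> 3 \<le> length cs \<and> set cs \<subseteq> S \<and>
     (\<forall>t < length cs. smooth_edge S b (cs ! t) (cs ! ((t + 1) mod length cs)))"

lemma theta_eq_theta_of: "theta S lam = theta_of (biresidue S lam)"
  by (intro ext) (simp add: theta_def theta_of_def Let_def)

lemma smoothable_iff_smooth_edge: "smoothable S lam = smooth_edge S (biresidue S lam)"
  by (intro ext) (simp add: smoothable_def smooth_edge_def theta_eq_theta_of)

lemma smooth_cycle_iff: "smooth_cycle S lam = is_smooth_cycle S (biresidue S lam)"
  by (intro ext) (simp add: smooth_cycle_def is_smooth_cycle_def smoothable_iff_smooth_edge)

lemma smooth_edge_theta_nat:
  assumes "smooth_edge S b i j" "k \<in> S - {i, j}"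
  shows "\<exists>q::nat. b j k + b k i = of_nat q * b i j"
proof -
  obtain q :: nat where "theta_of b i j k = of_nat q" using assms unfolding smooth_edge_def by blast
  then show ?thesis using assms(1) unfolding smooth_edge_def theta_of_def by (auto simp: field_simps)
qed

lemma theta_of_swap:
  assumes alt: "add_alternating S b" and "i \<in> S" "j \<in> S" "k \<in> S"
  shows "theta_of b j i k = theta_of b i j k"
proof -
  have e: "b i k = - b k i" "b k j = - b j k" "b j i = - b i j"
    using alt assms(2-4) unfolding add_alternating_def by blast+
  have num: "b i k + b k j = - (b j k + b k i)" unfolding e(1,2) by simp
  have "theta_of b j i k = (- (b j k + b k i)) / (- b i j)" unfolding theta_of_def num e(3) ..
  also have "\<dots> = theta_of b i j k" unfolding theta_of_def by (rule minus_divide_divide)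
  finally show ?thesis .
qed

lemma smooth_edge_sym:
  assumes alt: "add_alternating S b" and sm: "smooth_edge S b i j"
  shows "smooth_edge S b j i"
proof -
  have ij: "i \<in> S" "j \<in> S" "i \<noteq> j" "b i j \<noteq> 0" using sm unfolding smooth_edge_def by auto
  have "b j i = - b i j" using alt ij unfolding add_alternating_def by blast
  then have "b j i \<noteq> 0" using ij by simp
  moreover have "\<exists>m::nat. theta_of b j i k = of_nat m" if "k \<in> S - {j, i}" for k
    using sm that theta_of_swap[OF alt ij(1,2), of k] unfolding smooth_edge_def by auto
  ultimately show ?thesis using ij unfolding smooth_edge_def by blast
qed

lemma smooth_edge_restrict:
  assumes "I \<subseteq> S" "i \<in> I" "j \<in> I" "\<forall>a\<in>I. \<forall>c\<in>I. b' a c = b a c" "smooth_edge S b i j"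
  shows "smooth_edge I b' i j"
  using assms unfolding smooth_edge_def theta_of_def by (simp add: subset_iff)

lemma sum_theta_of:
  assumes fin: "finite S" and alt: "add_alternating S b" and nrm: "normalized S b"
    and ij: "i \<in> S" "j \<in> S" "i \<noteq> j" "b i j \<noteq> 0"
  shows "(\<Sum>k\<in>S - {i, j}. theta_of b i j k) = 2"
proof -
  have "b j i = - b i j" "b j j = - b j j" "b i i = - b i i"
    using alt ij unfolding add_alternating_def by blast+
  then have a: "b j i = - b i j" "b j j = 0" "b i i = 0" by (simp_all add: equal_neg_zero)
  have sub: "{i, j} \<subseteq> S" using ij by auto
  have "(\<Sum>k\<in>S - {i, j}. b k i) = (\<Sum>k\<in>S - {i, j}. - b i k)"
    using alt ij unfolding add_alternating_def by (intro sum.cong) blast+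
  moreover have "(\<Sum>k\<in>S - {i, j}. b j k) = - (\<Sum>k\<in>{i, j}. b j k)"
    "(\<Sum>k\<in>S - {i, j}. b i k) = - (\<Sum>k\<in>{i, j}. b i k)"
    using sum_diff[OF fin sub, of "b j"] sum_diff[OF fin sub, of "b i"] nrm ij
    unfolding normalized_def by simp_all
  ultimately have "(\<Sum>k\<in>S - {i, j}. b j k + b k i) = 2 * b i j"
    using a ij(3) by (simp add: sum.distrib sum_negf)
  then show ?thesis using ij unfolding theta_of_def by (simp add: sum_divide_distrib[symmetric])
qed

lemma smooth_edges_consecutive_ratio:
  assumes ij: "smooth_edge S b i j" and jl: "smooth_edge S b j l" and li: "l \<noteq> i"
  shows "\<exists>x y::nat. b j l * (1 + of_nat y) = b i j * (1 + of_nat x)"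
proof -
  have "l \<in> S - {i, j}" using jl li unfolding smooth_edge_def by auto
  then obtain x :: nat where x: "b j l + b l i = of_nat x * b i j"
    using smooth_edge_theta_nat[OF ij] by blast
  have "i \<in> S - {j, l}" using ij li unfolding smooth_edge_def by auto
  then obtain y :: nat where y: "b l i + b i j = of_nat y * b j l"
    using smooth_edge_theta_nat[OF jl] by blast
  have "b j l * (1 + of_nat y) = b j l + (b l i + b i j)" using y by (simp add: algebra_simps)
  also have "\<dots> = b i j + (b j l + b l i)" by (simp add: algebra_simps)
  also have "\<dots> = b i j * (1 + of_nat x)" using x by (simp add: algebra_simps)
  finally show ?thesis by blast
qed

lemma smooth_cycle_weight_pos:
  assumes cyc: "is_smooth_cycle S b cs" and t: "t < length cs"
  shows "\<exists>r>0. b (cs ! t) (cs ! ((t + 1) mod length cs)) = complex_of_real r * b (cs ! 0) (cs ! 1)"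
  using t
proof (induction t)
  case 0
  have "1 < length cs" using cyc unfolding is_smooth_cycle_def by simp
  then show ?case by (intro exI[of _ 1]) simp
next
  case (Suc t)
  let ?m = "length cs"
  have m3: "3 \<le> ?m" and dist: "distinct cs"
    and edge: "\<And>t. t < ?m \<Longrightarrow> smooth_edge S b (cs ! t) (cs ! ((t + 1) mod ?m))"
    using cyc unfolding is_smooth_cycle_def by auto
  have st: "(t + 1) mod ?m = Suc t" using Suc.prems by simp
  obtain r where r: "r > 0" "b (cs ! t) (cs ! Suc t) = complex_of_real r * b (cs ! 0) (cs ! 1)"
    using Suc st by auto
  have "(Suc t + 1) mod ?m \<noteq> t"
  proof (cases "Suc (Suc t) < ?m")
    case False
    then have "Suc (Suc t) = ?m" using Suc.prems by simp
    then show ?thesis using m3 by simp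
  qed simp
  moreover have "(Suc t + 1) mod ?m < ?m" using m3 by (intro mod_less_divisor) linarith
  ultimately have "cs ! ((Suc t + 1) mod ?m) \<noteq> cs ! t"
    using nth_eq_iff_index_eq[OF dist] Suc.prems by simp
  then obtain x y :: nat
    where xy: "b (cs ! Suc t) (cs ! ((Suc t + 1) mod ?m)) * (1 + of_nat y) = b (cs ! t) (cs ! Suc t) * (1 + of_nat x)"
    using smooth_edges_consecutive_ratio edge[of t] edge[of "Suc t"] Suc.prems st by fastforce
  have "(1 + of_nat y :: complex) \<noteq> 0" by (metis of_nat_Suc of_nat_eq_0_iff nat.distinct(1))
  then have "b (cs ! Suc t) (cs ! ((Suc t + 1) mod ?m))
      = complex_of_real (r * (1 + real x) / (1 + real y)) * b (cs ! 0) (cs ! 1)"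
    using xy r(2) by (simp add: field_simps)
  moreover have "r * (1 + real x) / (1 + real y) > 0" using r(1) by simp
  ultimately show ?case by blast
qed

lemma sum_lessThan_mod_shift:
  assumes "0 < (m::nat)"
  shows "(\<Sum>t<m. g ((t + 1) mod m)) = (\<Sum>t<m. (g t :: complex))"
proof -
  obtain m' where m: "m = Suc m'" using assms by (cases m) auto
  have "(\<Sum>t<Suc m'. g (Suc t mod Suc m')) = (\<Sum>t<m'. g (Suc t mod Suc m')) + g 0" by simp
  also have "(\<Sum>t<m'. g (Suc t mod Suc m')) = (\<Sum>t<m'. g (Suc t))" by (rule sum.cong) auto
  also have "(\<Sum>t<m'. g (Suc t)) + g 0 = (\<Sum>t<Suc m'. g t)" by (subst sum.lessThan_Suc_shift) simp
  finally show ?thesis using m by simp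
qed

lemma sum_nonneg_multiples_eq_0:
  fixes w :: complex
  assumes fin: "finite T" and w: "w \<noteq> 0" and c: "\<forall>t\<in>T. c t \<ge> 0"
    and sum: "(\<Sum>t\<in>T. of_real (c t) * w) = 0" and t: "t \<in> T"
  shows "c t = 0"
proof -
  have "of_real (\<Sum>t\<in>T. c t) * w = 0" using sum by (simp add: sum_distrib_right)
  then have "(\<Sum>t\<in>T. c t) = 0" using w by (simp only: mult_eq_0_iff of_real_eq_0_iff) simp
  then show ?thesis using sum_nonneg_eq_0_iff[OF fin] c t by blast
qed

text \<open>Each numerator at a vertex k off the cycle is a natural multiple of the edge weight,
  hence a nonnegative multiple of the first weight; the numerators telescope to 0 around the
  cycle, so they all vanish.\<close>
lemma smooth_cycle_outside:
  assumes alt: "add_alternating S b" and cyc: "is_smooth_cycle S b cs"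
    and t: "t < length cs" and k: "k \<in> S - set cs"
  shows "b (cs ! ((t + 1) mod length cs)) k + b k (cs ! t) = 0"
proof -
  let ?m = "length cs" and ?w = "b (cs ! 0) (cs ! 1)"
  define nxt where "nxt t = (t + 1) mod ?m" for t
  define num where "num t = b (cs ! nxt t) k + b k (cs ! t)" for t
  have m0: "0 < ?m" and sub: "set cs \<subseteq> S"
    and edge: "\<And>t. t < ?m \<Longrightarrow> smooth_edge S b (cs ! t) (cs ! nxt t)"
    using cyc unfolding is_smooth_cycle_def nxt_def by auto
  have "\<forall>t\<in>{..<?m}. \<exists>c\<ge>0. num t = of_real c * ?w"
  proof
    fix t assume t: "t \<in> {..<?m}"
    moreover have "nxt t < ?m" using m0 unfolding nxt_def by simp
    ultimately have "k \<in> S - {cs ! t, cs ! nxt t}" using k by auto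
    then obtain q :: nat where q: "num t = of_nat q * b (cs ! t) (cs ! nxt t)"
      using smooth_edge_theta_nat edge t unfolding num_def by blast
    obtain r where "r > 0" "b (cs ! t) (cs ! nxt t) = of_real r * ?w"
      using smooth_cycle_weight_pos[OF cyc] t unfolding nxt_def by auto
    then show "\<exists>c\<ge>0. num t = of_real c * ?w" using q by (intro exI[of _ "q * r"]) simp
  qed
  then obtain c where c: "\<forall>t\<in>{..<?m}. c t \<ge> 0 \<and> num t = of_real (c t) * ?w"
    by (metis bchoice)
  have "num t = b k (cs ! t) - b k (cs ! nxt t)" if "t < ?m" for t
  proof -
    have "cs ! nxt t \<in> S" using sub m0 unfolding nxt_def by auto
    then have "b (cs ! nxt t) k = - b k (cs ! nxt t)" using alt k unfolding add_alternating_def by blast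
    then show ?thesis unfolding num_def by simp
  qed
  then have "(\<Sum>t<?m. num t) = (\<Sum>t<?m. b k (cs ! t)) - (\<Sum>t<?m. b k (cs ! nxt t))"
    by (simp add: sum_subtractf)
  also have "\<dots> = 0" using sum_lessThan_mod_shift[OF m0, of "\<lambda>t. b k (cs ! t)"] unfolding nxt_def by simp
  finally have "(\<Sum>t<?m. num t) = 0" .
  moreover have "(\<Sum>t<?m. num t) = (\<Sum>t<?m. of_real (c t) * ?w)" using c by (intro sum.cong) auto
  moreover have "?w \<noteq> 0" using edge[OF m0] cyc unfolding smooth_edge_def is_smooth_cycle_def nxt_def by simp
  ultimately have "c t = 0" using sum_nonneg_multiples_eq_0[of "{..<?m}" ?w c t] c t by simp
  then show ?thesis using c t unfolding num_def nxt_def by simp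
qed

lemma nth_take_rotate:
  assumes "t < L" "L \<le> length xs"
  shows "take L (rotate st xs) ! t = xs ! ((st + t) mod length xs)"
  using assms by (simp add: nth_rotate)

lemma in_set_take_rotate:
  assumes "L \<le> length xs"
  shows "k \<in> set (take L (rotate st xs)) \<longleftrightarrow> (\<exists>t<L. k = xs ! ((st + t) mod length xs))"
proof -
  have "length (take L (rotate st xs)) = L" using assms by simp
  then show ?thesis unfolding in_set_conv_nth using nth_take_rotate[OF _ assms] by metis
qed

lemma smooth_cycle_shortcut:
  assumes cyc: "is_smooth_cycle S b cs" and st: "st < length cs" and L: "3 \<le> L" "L \<le> length cs"
    and chord: "smooth_edge S b (cs ! ((st + (L - 1)) mod length cs)) (cs ! st)"
  shows "is_smooth_cycle S b (take L (rotate st cs))"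
proof -
  let ?m = "length cs" and ?c = "take L (rotate st cs)"
  have edge: "\<And>t. t < ?m \<Longrightarrow> smooth_edge S b (cs ! t) (cs ! ((t + 1) mod ?m))"
    using cyc unfolding is_smooth_cycle_def by auto
  have m0: "0 < ?m" using st by linarith
  have c_nth: "?c ! u = cs ! ((st + u) mod ?m)" if "u < L" for u
    by (rule nth_take_rotate[OF that L(2)])
  have "smooth_edge S b (?c ! t) (?c ! ((t + 1) mod L))" if t: "t < L" for t
  proof (cases "t + 1 < L")
    case True
    have "?c ! ((t + 1) mod L) = cs ! (((st + t) mod ?m + 1) mod ?m)"
      using c_nth[of "t + 1"] True by (simp add: mod_Suc_eq)
    moreover have "smooth_edge S b (cs ! ((st + t) mod ?m)) (cs ! (((st + t) mod ?m + 1) mod ?m))"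
      using edge m0 by simp
    ultimately show ?thesis unfolding c_nth[OF t] by simp
  next
    case False
    then have "t + 1 = L" using t by simp
    then have "t = L - 1" "(t + 1) mod L = 0" by auto
    moreover have "?c ! 0 = cs ! st" using c_nth[of 0] L st by simp
    ultimately show ?thesis using chord unfolding c_nth[OF t] by simp
  qed
  moreover have "set ?c \<subseteq> set cs" using set_take_subset[of L "rotate st cs"] by simp
  ultimately show ?thesis using cyc L unfolding is_smooth_cycle_def by auto
qed

lemma smooth_cycle_shortcut_outside:
  assumes alt: "add_alternating S b" and cyc: "is_smooth_cycle S b cs"
    and st: "st < length cs" and L: "3 \<le> L" "L \<le> length cs"
    and chord: "smooth_edge S b (cs ! ((st + (L - 1)) mod length cs)) (cs ! st)"
    and k: "k \<in> S - set (take L (rotate st cs))"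
  shows "b (cs ! st) k + b k (cs ! ((st + (L - 1)) mod length cs)) = 0"
proof -
  let ?c = "take L (rotate st cs)"
  have "b (?c ! ((L - 1 + 1) mod length ?c)) k + b k (?c ! (L - 1)) = 0"
    by (rule smooth_cycle_outside[OF alt smooth_cycle_shortcut[OF cyc st L chord] _ k]) (use L in simp)
  moreover have "(L - 1 + 1) mod length ?c = 0" using L by simp
  moreover have "?c ! 0 = cs ! st" "?c ! (L - 1) = cs ! ((st + (L - 1)) mod length cs)"
    using nth_take_rotate[of 0 L cs st] nth_take_rotate[of "L - 1" L cs st] L st by simp_all
  ultimately show ?thesis by simp
qed

lemma take_rotate_arcs_inter:
  assumes dist: "distinct xs" and ac: "a < c" "c < length xs"
    and k1: "k \<in> set (take (c - a + 1) (rotate a xs))"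
    and k2: "k \<in> set (take (length xs - c + a + 1) (rotate c xs))"
  shows "k = xs ! a \<or> k = xs ! c"
proof -
  let ?m = "length xs"
  obtain t1 where t1: "t1 < c - a + 1" "k = xs ! ((a + t1) mod ?m)"
    using k1 in_set_take_rotate[of "c - a + 1" xs] ac by auto
  obtain t2 where t2: "t2 < ?m - c + a + 1" "k = xs ! ((c + t2) mod ?m)"
    using k2 in_set_take_rotate[of "?m - c + a + 1" xs] ac by auto
  have x1: "(a + t1) mod ?m = a + t1" "a + t1 \<le> c" using t1(1) ac by auto
  have x2: "c \<le> (c + t2) mod ?m \<or> (c + t2) mod ?m \<le> a"
  proof (cases "c + t2 < ?m")
    case False
    then have "(c + t2) mod ?m = (c + t2 - ?m) mod ?m" by (simp add: le_mod_geq)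
    also have "\<dots> = c + t2 - ?m" using t2(1) ac by simp
    finally show ?thesis using t2(1) ac by arith
  qed simp
  have "(c + t2) mod ?m < ?m" using ac by (intro mod_less_divisor) linarith
  moreover have "a + t1 < ?m" using x1 ac by linarith
  ultimately have "a + t1 = (c + t2) mod ?m"
    using t1(2) t2(2) x1(1) nth_eq_iff_index_eq[OF dist] by metis
  then have "a + t1 = a \<or> a + t1 = c" using x1 x2 by linarith
  then show ?thesis using t1(2) x1 by auto
qed

lemma cycle_edge_consecutive:
  assumes ac: "a < c" "c < length cs" and cons: "c = a + 1 \<or> (a = 0 \<and> c = length cs - 1)"
  shows "cycle_edge cs (cs ! a) (cs ! c)"
  using cons
proof
  assume "c = a + 1"
  then show ?thesis unfolding cycle_edge_def using ac by (intro exI[of _ a]) auto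
next
  assume h: "a = 0 \<and> c = length cs - 1"
  then have "c + 1 = length cs" using ac by simp
  then have "(c + 1) mod length cs = 0" by simp
  then show ?thesis unfolding cycle_edge_def using ac h by (intro exI[of _ c]) (auto simp: insert_commute)
qed

text \<open>Both arcs into which a chord cuts the cycle, closed up by the chord, are again smooth
  cycles; every other vertex lies off one of them, so all angle numbers of the chord vanish,
  contradicting that they add up to 2.\<close>
lemma smooth_cycle_chord:
  assumes fin: "finite S" and alt: "add_alternating S b" and nrm: "normalized S b"
    and cyc: "is_smooth_cycle S b cs" and ac: "a < c" "c < length cs"
    and sm: "smooth_edge S b (cs ! a) (cs ! c)"
  shows "cycle_edge cs (cs ! a) (cs ! c)"
proof (rule ccontr)
  assume ne: "\<not> cycle_edge cs (cs ! a) (cs ! c)"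
  let ?m = "length cs" and ?i = "cs ! a" and ?j = "cs ! c"
  define L1 where "L1 = c - a + 1"
  define L2 where "L2 = ?m - c + a + 1"
  have "c \<noteq> a + 1" "\<not> (a = 0 \<and> c = ?m - 1)" using cycle_edge_consecutive[OF ac] ne by blast+
  then have L1: "3 \<le> L1" "L1 \<le> ?m" and L2: "3 \<le> L2" "L2 \<le> ?m"
    unfolding L1_def L2_def using ac by auto
  have e1: "(a + (L1 - 1)) mod ?m = c" and e2: "(c + (L2 - 1)) mod ?m = a"
    unfolding L1_def L2_def using ac by auto
  have "theta_of b ?i ?j k = 0" if k: "k \<in> S - {?i, ?j}" for k
  proof (cases "k \<in> set (take L2 (rotate c cs))")
    case True
    have "distinct cs" using cyc unfolding is_smooth_cycle_def by simp
    then have k1: "k \<in> S - set (take L1 (rotate a cs))"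
      using take_rotate_arcs_inter[OF _ ac] True k unfolding L1_def L2_def by blast
    have "b ?i k + b k ?j = 0"
      using smooth_cycle_shortcut_outside[OF alt cyc _ L1 _ k1] smooth_edge_sym[OF alt sm] ac e1 by simp
    then have "theta_of b ?j ?i k = 0" unfolding theta_of_def by simp
    then show ?thesis using theta_of_swap[OF alt] sm k unfolding smooth_edge_def by auto
  next
    case False
    then have k2: "k \<in> S - set (take L2 (rotate c cs))" using k by blast
    have "b ?j k + b k ?i = 0" using smooth_cycle_shortcut_outside[OF alt cyc _ L2 _ k2] sm ac e2 by simp
    then show ?thesis unfolding theta_of_def by simp
  qed
  then have "(\<Sum>k\<in>S - {?i, ?j}. theta_of b ?i ?j k) = 0" by simp
  moreover have "(\<Sum>k\<in>S - {?i, ?j}. theta_of b ?i ?j k) = 2"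
    using sum_theta_of[OF fin alt nrm] sm unfolding smooth_edge_def by blast
  ultimately show False by simp
qed

lemma smooth_cycle_block_const:
  assumes alt: "add_alternating S b" and cyc: "is_smooth_cycle S b cs"
  shows "block_const S (set cs) b"
  unfolding block_const_def
proof (intro ballI)
  fix k i i' assume k: "k \<in> S - set cs" and "i \<in> set cs" "i' \<in> set cs"
  let ?m = "length cs"
  have m0: "0 < ?m" and sub: "set cs \<subseteq> S" using cyc unfolding is_smooth_cycle_def by auto
  have step: "b k (cs ! t) = b k (cs ! ((t + 1) mod ?m))" if t: "t < ?m" for t
  proof -
    have "cs ! ((t + 1) mod ?m) \<in> S" using sub m0 by auto
    then have "b (cs ! ((t + 1) mod ?m)) k = - b k (cs ! ((t + 1) mod ?m))"
      using alt k unfolding add_alternating_def by blast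
    then show ?thesis using smooth_cycle_outside[OF alt cyc t k] by (simp add: add_eq_0_iff2)
  qed
  have const: "b k (cs ! t) = b k (cs ! 0)" if "t < ?m" for t
    using that
  proof (induction t)
    case (Suc t)
    then show ?case using step[of t] by simp
  qed simp
  show "b k i = b k i'"
    using const \<open>i \<in> set cs\<close> \<open>i' \<in> set cs\<close> by (metis in_set_conv_nth)
qed

lemma nth_succ_mod_in_set: "t < length xs \<Longrightarrow> xs ! ((t + 1) mod length xs) \<in> set xs"
  by (intro nth_mem mod_less_divisor) linarith

lemma cycle_edge_sym: "cycle_edge cs i j \<longleftrightarrow> cycle_edge cs j i"
  unfolding cycle_edge_def by (simp add: insert_commute)

lemma cycle_edge_in_set:
  assumes "cycle_edge cs i j"
  shows "i \<in> set cs" "j \<in> set cs"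
proof -
  obtain t where t: "t < length cs" "{i, j} = {cs ! t, cs ! ((t + 1) mod length cs)}"
    using assms unfolding cycle_edge_def by blast
  then have "cs ! t \<in> set cs" "cs ! ((t + 1) mod length cs) \<in> set cs"
    using nth_succ_mod_in_set by auto
  then show "i \<in> set cs" "j \<in> set cs" using t(2) by (auto simp: doubleton_eq_iff)
qed

lemma smooth_cycle_edge_iff:
  assumes fin: "finite S" and alt: "add_alternating S b" and nrm: "normalized S b"
    and cyc: "is_smooth_cycle S b cs" and i: "i \<in> set cs" and j: "j \<in> set cs"
  shows "smooth_edge S b i j \<longleftrightarrow> cycle_edge cs i j"
proof
  assume sm: "smooth_edge S b i j"
  obtain a c where a: "a < length cs" "i = cs ! a" and c: "c < length cs" "j = cs ! c"
    using i j by (auto simp: in_set_conv_nth)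
  have "a \<noteq> c" using sm a c unfolding smooth_edge_def by auto
  then consider "a < c" | "c < a" by linarith
  then show "cycle_edge cs i j"
  proof cases
    case 1
    then show ?thesis using smooth_cycle_chord[OF fin alt nrm cyc 1 c(1)] sm a c by simp
  next
    case 2
    then have "cycle_edge cs j i"
      using smooth_cycle_chord[OF fin alt nrm cyc 2 a(1)] smooth_edge_sym[OF alt sm] a c by simp
    then show ?thesis by (simp add: cycle_edge_sym)
  qed
next
  assume "cycle_edge cs i j"
  then obtain t where t: "t < length cs" "{i, j} = {cs ! t, cs ! ((t + 1) mod length cs)}"
    unfolding cycle_edge_def by blast
  then have "smooth_edge S b (cs ! t) (cs ! ((t + 1) mod length cs))"
    using cyc unfolding is_smooth_cycle_def by blast
  then show "smooth_edge S b i j" using t(2) smooth_edge_sym[OF alt] by (auto simp: doubleton_eq_iff)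
qed

lemma cycle_edge_theta_outside:
  assumes alt: "add_alternating S b" and cyc: "is_smooth_cycle S b cs"
    and ij: "cycle_edge cs i j" and k: "k \<in> S - set cs"
  shows "theta_of b i j k = 0"
proof -
  let ?nxt = "\<lambda>t. (t + 1) mod length cs"
  obtain t where t: "t < length cs" "{i, j} = {cs ! t, cs ! ?nxt t}"
    using ij unfolding cycle_edge_def by blast
  have "b (cs ! ?nxt t) k + b k (cs ! t) = 0" by (rule smooth_cycle_outside[OF alt cyc t(1) k])
  then have "theta_of b (cs ! t) (cs ! ?nxt t) k = 0" unfolding theta_of_def by simp
  moreover have "cs ! t \<in> S" "cs ! ?nxt t \<in> S" "k \<in> S"
    using cyc t(1) k nth_succ_mod_in_set unfolding is_smooth_cycle_def by auto
  ultimately show ?thesis using t(2) theta_of_swap[OF alt] by (auto simp: doubleton_eq_iff)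
qed

lemma is_smooth_cycle_restrict:
  assumes cyc: "is_smooth_cycle S b cs" and agree: "\<forall>a\<in>set cs. \<forall>c\<in>set cs. b' a c = b a c"
  shows "is_smooth_cycle (set cs) b' cs"
  unfolding is_smooth_cycle_def
proof (intro conjI allI impI)
  fix t assume t: "t < length cs"
  then have "cs ! t \<in> set cs" "cs ! ((t + 1) mod length cs) \<in> set cs"
    using nth_succ_mod_in_set by auto
  then show "smooth_edge (set cs) b' (cs ! t) (cs ! ((t + 1) mod length cs))"
    using smooth_edge_restrict[OF _ _ _ agree] cyc t unfolding is_smooth_cycle_def by blast
qed (use cyc in \<open>auto simp: is_smooth_cycle_def\<close>)

lemma block_const_theta_of_inside:
  assumes alt: "add_alternating V b" and blk: "block_const V I b" and IV: "I \<subseteq> V"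
    and ij: "i \<in> I" "j \<in> I" and k: "k \<in> V - I"
  shows "theta_of b i j k = 0"
proof -
  have "b j k = - b k j" using alt ij k IV unfolding add_alternating_def by blast
  moreover have "b k j = b k i" using blk ij k unfolding block_const_def by blast
  ultimately show ?thesis unfolding theta_of_def by simp
qed

text \<open>Off the block, the angle numbers at vertices of I are equal natural numbers adding up to
  at most 2, so with at least three vertices they vanish.\<close>
lemma block_const_theta_of_off_block:
  assumes fin: "finite V" and alt: "add_alternating V b" and nrm: "normalized V b"
    and blk: "block_const V I b" and IV: "I \<subseteq> V" and I3: "3 \<le> card I"
    and sm: "smooth_edge V b i j" and ij: "i \<notin> I" "j \<notin> I" and k: "k \<in> I"
  shows "theta_of b i j k = 0"
proof -
  have ijV: "i \<in> V" "j \<in> V" "i \<noteq> j" "b i j \<noteq> 0" using sm unfolding smooth_edge_def by auto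
  have IV': "I \<subseteq> V - {i, j}" using IV ij by auto
  have same: "theta_of b i j k' = theta_of b i j k" if "k' \<in> I" for k'
  proof -
    have "b j k' = b j k" "b i k' = b i k" using blk that k ij ijV unfolding block_const_def by blast+
    moreover have "b k' i = - b i k'" "b k i = - b i k"
      using alt that k ijV IV unfolding add_alternating_def by blast+
    ultimately show ?thesis unfolding theta_of_def by simp
  qed
  have "\<forall>k'\<in>V - {i, j}. \<exists>q::nat. theta_of b i j k' = of_nat q" using sm unfolding smooth_edge_def by blast
  then obtain Q :: "nat \<Rightarrow> nat" where Q: "\<forall>k'\<in>V - {i, j}. theta_of b i j k' = of_nat (Q k')"
    by (metis bchoice)
  have "of_nat (\<Sum>k'\<in>V - {i, j}. Q k') = (\<Sum>k'\<in>V - {i, j}. theta_of b i j k')" using Q by simp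
  also have "\<dots> = of_nat 2" using sum_theta_of[OF fin alt nrm ijV] by simp
  finally have "(\<Sum>k'\<in>V - {i, j}. Q k') = 2" by (simp only: of_nat_eq_iff)
  then have le: "(\<Sum>k'\<in>I. Q k') \<le> 2" using sum_mono2[OF _ IV', of Q] fin by simp
  have "Q k' = Q k" if "k' \<in> I" for k'
    using Q same[OF that] IV' that k by (metis subsetD of_nat_eq_iff)
  then have "(\<Sum>k'\<in>I. Q k') = card I * Q k" by simp
  with le I3 have "Q k = 0" by (cases "Q k") auto
  moreover have "theta_of b i j k = of_nat (Q k)" using Q IV' k by blast
  ultimately show ?thesis by simp
qed

section \<open>The vertex set of a smooth cycle\<close>

context
  fixes n :: nat and lam :: "nat \<Rightarrow> nat \<Rightarrow> complex" and cs :: "nat list"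
  assumes alt: "add_alternating {..<n} lam" and nrm: "normalized {..<n} lam"
    and rank: "mrank {..<n} lam = n - 1" and cycle: "smooth_cycle {..<n} lam cs"
begin

lemma cycle_vertices: "set cs \<subseteq> {..<n}" "set cs \<noteq> {}" "3 \<le> card (set cs)"
  using cycle unfolding smooth_cycle_def by (auto simp: distinct_card)

lemma full_constant_kernel: "constant_kernel {..<n} lam"
  by (rule constant_kernel_if_mrank[OF nrm rank])

lemma full_biresidue: "is_biresidue {..<n} lam (biresidue {..<n} lam)"
proof -
  have "{..<n} \<noteq> {}" using cycle_vertices(1,2) by (metis subset_empty)
  then show ?thesis using is_biresidue_biresidue[OF _ _ alt nrm full_constant_kernel] by simp
qed

lemma full_biresidue_alternating:
  "add_alternating {..<n} (biresidue {..<n} lam)" "normalized {..<n} (biresidue {..<n} lam)"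
  using full_biresidue unfolding is_biresidue_def by auto

lemma full_biresidue_smooth_cycle: "is_smooth_cycle {..<n} (biresidue {..<n} lam) cs"
  using cycle by (simp add: smooth_cycle_iff)

lemma full_biresidue_block_const: "block_const {..<n} (set cs) (biresidue {..<n} lam)"
  by (rule smooth_cycle_block_const[OF full_biresidue_alternating(1) full_biresidue_smooth_cycle])

lemma lam_block_const: "block_const {..<n} (set cs) lam"
  using block_const_lam_if_block_const_biresidue[OF _ cycle_vertices(1,2) full_biresidue
      full_biresidue_block_const] by simp

lemma cycle_normalized: "normalized (set cs) lam"
  using normalized_restrict[OF _ cycle_vertices(1,2) alt nrm lam_block_const] by simp

lemma cycle_constant_kernel: "constant_kernel (set cs) lam"
  using constant_kernel_restrict[OF _ cycle_vertices(1,2) cycle_normalized lam_block_const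
      constant_kernel_imp_inj_on_zero_sum[OF _ full_constant_kernel]] by simp

lemma cycle_alternating: "add_alternating (set cs) lam"
  using alt cycle_vertices(1) unfolding add_alternating_def by blast

lemma cycle_mrank: "mrank (set cs) lam = card (set cs) - 1"
  using mrank_if_constant_kernel[OF _ cycle_vertices(2) cycle_alternating cycle_normalized
      cycle_constant_kernel] by simp

lemma cycle_biresidue:
  "is_biresidue (set cs) lam (biresidue (set cs) lam)"
  using is_biresidue_biresidue[OF _ cycle_vertices(2) cycle_alternating cycle_normalized
      cycle_constant_kernel] by simp

lemma cycle_biresidue_eq:
  assumes "i \<in> set cs" "j \<in> set cs"
  shows "biresidue (set cs) lam i j = biresidue {..<n} lam i j"
proof -
  have "normalized (set cs) (biresidue {..<n} lam)"
    using normalized_restrict[OF _ cycle_vertices(1,2) full_biresidue_alternating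
        full_biresidue_block_const] by simp
  then have "is_biresidue (set cs) lam (biresidue {..<n} lam)"
    using is_biresidue_restrict[OF _ cycle_vertices(1) full_biresidue full_biresidue_block_const] by simp
  then show ?thesis
    using biresidue_eq_on[OF _ cycle_vertices(2) cycle_alternating cycle_normalized
        cycle_constant_kernel _ assms] by simp
qed

lemma colored_angle_of_chord:
  assumes "i \<in> set cs" "j \<in> set cs" "angle_colored {..<n} lam i j k"
  shows "k \<in> set cs"
  using assms block_const_theta_of_inside[OF full_biresidue_alternating(1) full_biresidue_block_const
      cycle_vertices(1) assms(1,2)]
  unfolding angle_colored_def theta_eq_theta_of by blast

lemma colored_angle_off_cycle:
  assumes "i \<notin> set cs" "j \<notin> set cs" "angle_colored {..<n} lam i j k"
  shows "k \<notin> set cs"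
  using assms block_const_theta_of_off_block[OF _ full_biresidue_alternating full_biresidue_block_const
      cycle_vertices(1,3) _ assms(1,2)]
  unfolding angle_colored_def theta_eq_theta_of smoothable_iff_smooth_edge by blast

lemma cycle_smoothable_iff: "smoothable (set cs) lam i j \<longleftrightarrow> cycle_edge cs i j"
proof -
  let ?b = "biresidue (set cs) lam"
  have b: "add_alternating (set cs) ?b" "normalized (set cs) ?b"
    using cycle_biresidue unfolding is_biresidue_def by auto
  have "is_smooth_cycle (set cs) ?b cs"
    using is_smooth_cycle_restrict[OF full_biresidue_smooth_cycle] cycle_biresidue_eq by blast
  then have "smooth_edge (set cs) ?b i j \<longleftrightarrow> cycle_edge cs i j" if "i \<in> set cs" "j \<in> set cs"
    using smooth_cycle_edge_iff[OF _ b] that by simp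
  then show ?thesis
    using cycle_edge_in_set unfolding smoothable_iff_smooth_edge smooth_edge_def by blast
qed

lemma cycle_edge_angle_iff:
  assumes ij: "cycle_edge cs i j" and P0: "\<not> P 0"
  shows "(smoothable (set cs) lam i j \<and> k \<in> set cs - {i, j} \<and> P (theta (set cs) lam i j k))
     \<longleftrightarrow> (smoothable {..<n} lam i j \<and> k \<in> {..<n} - {i, j} \<and> P (theta {..<n} lam i j k))"
proof -
  have ijI: "i \<in> set cs" "j \<in> set cs" by (rule cycle_edge_in_set[OF ij])+
  have "smoothable {..<n} lam i j"
    using smooth_cycle_edge_iff[OF _ full_biresidue_alternating full_biresidue_smooth_cycle ijI] ij
    unfolding smoothable_iff_smooth_edge by simp
  moreover have "smoothable (set cs) lam i j" using ij cycle_smoothable_iff by simp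
  moreover have "theta (set cs) lam i j k = theta {..<n} lam i j k" if "k \<in> set cs"
    using cycle_biresidue_eq ijI that unfolding theta_eq_theta_of theta_of_def by simp
  moreover have "theta {..<n} lam i j k = 0" if "k \<in> {..<n} - set cs"
    using cycle_edge_theta_outside[OF full_biresidue_alternating(1) full_biresidue_smooth_cycle ij that]
    unfolding theta_eq_theta_of .
  ultimately show ?thesis using cycle_vertices(1) P0 by (cases "k \<in> set cs") auto
qed

lemma lam_cycle_rows_eq:
  assumes "i1 \<in> set cs" "i2 \<in> set cs" "j \<in> {..<n} - set cs"
  shows "lam i1 j = lam i2 j"
proof -
  have "i1 \<in> {..<n}" "i2 \<in> {..<n}" using assms cycle_vertices(1) by auto
  then have "lam i1 j = - lam j i1" "lam i2 j = - lam j i2"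
    using alt assms(3) unfolding add_alternating_def by blast+
  moreover have "lam j i1 = lam j i2" using lam_block_const assms unfolding block_const_def by blast
  ultimately show ?thesis by simp
qed

end

theorem lemma5p12:
  fixes n :: nat and lam :: "nat \<Rightarrow> nat \<Rightarrow> complex" and cs :: "nat list"
  assumes "add_alternating {..<n} lam"
    and "normalized {..<n} lam"
    and "mrank {..<n} lam = n - 1"
    and "smooth_cycle {..<n} lam cs"
  shows "(\<forall>i j k. smoothable {..<n} lam i j \<and> i \<in> set cs \<and> j \<in> set cs
              \<and> angle_colored {..<n} lam i j k \<longrightarrow> k \<in> set cs)
       \<and> (\<forall>i j k. smoothable {..<n} lam i j \<and> i \<notin> set cs \<and> j \<notin> set cs
              \<and> angle_colored {..<n} lam i j k \<longrightarrow> k \<notin> set cs)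
       \<and> normalized (set cs) lam
       \<and> mrank (set cs) lam = card (set cs) - 1
       \<and> (\<forall>i j. smoothable (set cs) lam i j \<longleftrightarrow> cycle_edge cs i j)
       \<and> (\<forall>i j k. cycle_edge cs i j \<longrightarrow>
              (angle_colored (set cs) lam i j k \<longleftrightarrow> angle_colored {..<n} lam i j k)
            \<and> (angle_dark (set cs) lam i j k \<longleftrightarrow> angle_dark {..<n} lam i j k)
            \<and> (angle_light (set cs) lam i j k \<longleftrightarrow> angle_light {..<n} lam i j k))
       \<and> (\<forall>i1\<in>set cs. \<forall>i2\<in>set cs. \<forall>j\<in>{..<n} - set cs. lam i1 j = lam i2 j)"
proof -
  have "(angle_colored (set cs) lam i j k \<longleftrightarrow> angle_colored {..<n} lam i j k)
      \<and> (angle_dark (set cs) lam i j k \<longleftrightarrow> angle_dark {..<n} lam i j k)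
      \<and> (angle_light (set cs) lam i j k \<longleftrightarrow> angle_light {..<n} lam i j k)"
    if "cycle_edge cs i j" for i j k
    using cycle_edge_angle_iff[OF assms that, of "\<lambda>x. x \<noteq> 0"]
      cycle_edge_angle_iff[OF assms that, of "\<lambda>x. x = 2"] cycle_edge_angle_iff[OF assms that, of "\<lambda>x. x = 1"]
    unfolding angle_colored_def angle_dark_def angle_light_def by simp
  then show ?thesis
    using colored_angle_of_chord[OF assms] colored_angle_off_cycle[OF assms] cycle_normalized[OF assms]
      cycle_mrank[OF assms] cycle_smoothable_iff[OF assms] lam_cycle_rows_eq[OF assms]
    by blast
qed

end
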